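(* Let $S=\{s_0,\dots,s_n\}$ be the vertex set of a regular simplex in $\mathbb{R}^n$. There exists $\delta>0$ such that every set $A=\{a_0,\dots,a_n\}\subset\mathbb{R}^n$ with $|a_i-s_i|<\delta$ for all $i$ is Euclidean sub-$p$-toral for every prime $p\ge 2$.
   Context: A $p$-torus is a group isomorphic to $(\mathbb{Z}_p)^\alpha$ for some $\alpha\ge1$. A set $X\subset\mathbb{R}^k$ is Euclidean sub-$p$-toral if there exist $n\ge k$, a $p$-torus $G$ and an action of $G$ on $\mathbb{R}^n$ by isometries such that $X$ (viewed in $\mathbb{R}^n$ via the standard inclusion $\mathbb{R}^k\subset\mathbb{R}^n$) is contained in a single $G$-orbit. *)

theory Defs
  imports Complex_Main "HOL-Computational_Algebra.Primes"
    "HOL-Algebra.Group_Action" "HOL-Algebra.Elementary_Groups" "HOL-Algebra.Product_Groups"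
begin

text \<open>Euclidean space R^m, realised as real sequences vanishing from index m on.
  With this convention the standard inclusion R^k into R^m (k \<le> m) is the identity.\<close>
definition euclid :: "nat \<Rightarrow> (nat \<Rightarrow> real) set" where
  "euclid m = {x. \<forall>i\<ge>m. x i = 0}"

definition edist :: "nat \<Rightarrow> (nat \<Rightarrow> real) \<Rightarrow> (nat \<Rightarrow> real) \<Rightarrow> real" where
  "edist m x y = sqrt (\<Sum>i<m. (x i - y i)^2)"

definition p_torus :: "nat \<Rightarrow> ('g, 'c) monoid_scheme \<Rightarrow> bool" where
  "p_torus p G \<longleftrightarrow> (\<exists>\<alpha>::nat. \<alpha> \<ge> 1 \<and> G \<cong> product_group {..<\<alpha>} (\<lambda>_. integer_mod_group p))"

definition sub_p_toral :: "nat \<Rightarrow> nat \<Rightarrow> (nat \<Rightarrow> real) set \<Rightarrow> bool" where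
  "sub_p_toral p k X \<longleftrightarrow> X \<subseteq> euclid k \<and>
     (\<exists>m\<ge>k. \<exists>(G :: (nat \<Rightarrow> int) monoid) \<phi>.
        p_torus p G \<and> group_action G (euclid m) \<phi> \<and>
        (\<forall>g\<in>carrier G. \<forall>x\<in>euclid m. \<forall>y\<in>euclid m. edist m (\<phi> g x) (\<phi> g y) = edist m x y) \<and>
        (\<exists>x\<in>euclid m. X \<subseteq> orbit G \<phi> x))"

definition regular_simplex :: "nat \<Rightarrow> (nat \<Rightarrow> nat \<Rightarrow> real) \<Rightarrow> bool" where
  "regular_simplex n s \<longleftrightarrow> (\<forall>i\<le>n. s i \<in> euclid n) \<and>
     (\<exists>d>0. \<forall>i\<le>n. \<forall>j\<le>n. i \<noteq> j \<longrightarrow> edist n (s i) (s j) = d)"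

end

theory Submission
  imports Defs "HOL-Analysis.L2_Norm"
begin

text \<open>Sub-p-torality only depends on the pairwise distances of a configuration, because two
  congruent finite configurations in R^m are related by a product of reflections. The torus
  (Z_p)^K, rotating K coordinate planes by multiples of 2 pi / p, has orbits realising every
  nonnegative combination of cut semimetrics on binary labellings. A squared-distance matrix
  close to that of a regular simplex is such a combination of the singleton and pair cuts:
  the singletons carry the common value and the pairs absorb the perturbation.\<close>

definition sqdist :: "nat \<Rightarrow> (nat \<Rightarrow> real) \<Rightarrow> (nat \<Rightarrow> real) \<Rightarrow> real" where
  "sqdist m x y = (\<Sum>i<m. (x i - y i)^2)"

lemma edist_eq_sqrt_sqdist: "edist m x y = sqrt (sqdist m x y)"
  by (simp add: edist_def sqdist_def)

lemma sqdist_nonneg: "sqdist m x y \<ge> 0"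
  unfolding sqdist_def by (simp add: sum_nonneg)

lemma sqdist_commute: "sqdist m x y = sqdist m y x"
  unfolding sqdist_def by (simp add: power2_commute)

lemma sqdist_self [simp]: "sqdist m x x = 0"
  unfolding sqdist_def by simp

lemma sqdist_pos:
  assumes "x \<in> euclid m" "y \<in> euclid m" "x \<noteq> y"
  shows "sqdist m x y > 0"
proof -
  obtain i where i: "x i \<noteq> y i" using assms(3) by auto
  have "i < m"
  proof (rule ccontr)
    assume "\<not> i < m"
    then have "x i = 0" "y i = 0" using assms(1,2) unfolding euclid_def by auto
    with i show False by simp
  qed
  have "0 < (x i - y i)^2" using i by simp
  also have "\<dots> \<le> sqdist m x y"
    unfolding sqdist_def by (rule member_le_sum) (use \<open>i < m\<close> in auto)
  finally show ?thesis .
qed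

lemma sqdist_euclid_le:
  assumes "x \<in> euclid n" "y \<in> euclid n" "n \<le> m"
  shows "sqdist m x y = sqdist n x y"
  unfolding sqdist_def
proof (rule sum.mono_neutral_right)
  show "\<forall>i\<in>{..<m} - {..<n}. (x i - y i)^2 = 0" using assms(1,2) unfolding euclid_def by auto
qed (use assms(3) in auto)

lemma edist_commute: "edist m x y = edist m y x"
  unfolding edist_eq_sqrt_sqdist by (simp add: sqdist_commute)

lemma edist_triangle: "edist m x z \<le> edist m x y + edist m y z"
proof -
  have "edist m x z = L2_set (\<lambda>i. (x i - y i) + (y i - z i)) {..<m}"
    unfolding edist_def L2_set_def by simp
  also have "\<dots> \<le> L2_set (\<lambda>i. x i - y i) {..<m} + L2_set (\<lambda>i. y i - z i) {..<m}"
    by (rule L2_set_triangle_ineq)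
  also have "\<dots> = edist m x y + edist m y z"
    unfolding edist_def L2_set_def by simp
  finally show ?thesis .
qed

lemma sqdist_perturbed:
  assumes "edist m x x' < \<delta>" "edist m y y' < \<delta>" "edist m x' y' = d" "\<delta> \<le> d"
  shows "\<bar>sqdist m x y - d^2\<bar> \<le> 8 * \<delta> * d"
proof -
  define X where "X = edist m x y"
  have "X \<ge> 0" unfolding X_def edist_eq_sqrt_sqdist using sqdist_nonneg by simp
  have "d \<ge> 0" unfolding assms(3)[symmetric] edist_eq_sqrt_sqdist using sqdist_nonneg by simp
  have sq: "sqdist m x y = X^2"
    unfolding X_def edist_eq_sqrt_sqdist using sqdist_nonneg by simp
  have "X \<le> edist m x x' + edist m x' y" unfolding X_def by (rule edist_triangle)
  also have "edist m x' y \<le> d + edist m y' y" using edist_triangle assms(3) by metis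
  finally have upper: "X < d + 2 * \<delta>" using assms(1,2) edist_commute[of m y' y] by linarith
  have "d \<le> edist m x' x + edist m x y'" using edist_triangle assms(3) by metis
  also have "edist m x y' \<le> X + edist m y y'" unfolding X_def by (rule edist_triangle)
  finally have lower: "d < X + 2 * \<delta>" using assms(1,2) edist_commute[of m x' x] by linarith
  have "X^2 - d^2 = (X - d) * (X + d)" by (simp add: power2_eq_square algebra_simps)
  then have "\<bar>X^2 - d^2\<bar> = \<bar>X - d\<bar> * (X + d)" using \<open>X \<ge> 0\<close> \<open>d \<ge> 0\<close> by (simp add: abs_mult)
  also have "\<dots> \<le> (2 * \<delta>) * (4 * d)"
    by (rule mult_mono) (use upper lower assms(4) \<open>X \<ge> 0\<close> \<open>d \<ge> 0\<close> in auto)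
  finally show ?thesis unfolding sq by simp
qed

definition euclid_isometry :: "nat \<Rightarrow> ((nat \<Rightarrow> real) \<Rightarrow> (nat \<Rightarrow> real)) \<Rightarrow> bool" where
  "euclid_isometry m F \<longleftrightarrow> bij_betw F (euclid m) (euclid m) \<and>
     (\<forall>x\<in>euclid m. \<forall>y\<in>euclid m. sqdist m (F x) (F y) = sqdist m x y)"

lemma euclid_isometry_id: "euclid_isometry m (\<lambda>x. x)"
  unfolding euclid_isometry_def by (simp add: bij_betw_id[unfolded id_def])

lemma euclid_isometry_comp:
  assumes "euclid_isometry m F" "euclid_isometry m H"
  shows "euclid_isometry m (H \<circ> F)"
proof -
  have "\<forall>x\<in>euclid m. F x \<in> euclid m"
    using assms(1) unfolding euclid_isometry_def bij_betw_def by auto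
  then show ?thesis using assms unfolding euclid_isometry_def by (auto intro: bij_betw_trans)
qed

text \<open>The signed position of x relative to the perpendicular bisector of b and c, scaled by |b - c|.\<close>
definition bisector_coord :: "nat \<Rightarrow> (nat \<Rightarrow> real) \<Rightarrow> (nat \<Rightarrow> real) \<Rightarrow> (nat \<Rightarrow> real) \<Rightarrow> real" where
  "bisector_coord m b c x = (\<Sum>i<m. (x i - (b i + c i) / 2) * (b i - c i))"

definition reflection :: "nat \<Rightarrow> (nat \<Rightarrow> real) \<Rightarrow> (nat \<Rightarrow> real) \<Rightarrow> (nat \<Rightarrow> real) \<Rightarrow> (nat \<Rightarrow> real)" where
  "reflection m b c x = (\<lambda>i. x i - 2 * bisector_coord m b c x / sqdist m b c * (b i - c i))"

lemma sqdist_eq_sum_mult: "sqdist m b c = (\<Sum>i<m. (b i - c i) * (b i - c i))"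
  unfolding sqdist_def by (simp add: power2_eq_square)

lemma bisector_coord_reflection:
  assumes "sqdist m b c \<noteq> 0"
  shows "bisector_coord m b c (reflection m b c x) = - bisector_coord m b c x"
proof -
  define t where "t = 2 * bisector_coord m b c x / sqdist m b c"
  have "bisector_coord m b c (reflection m b c x)
      = (\<Sum>i<m. (x i - (b i + c i) / 2) * (b i - c i) - t * ((b i - c i) * (b i - c i)))"
    unfolding bisector_coord_def reflection_def t_def by (rule sum.cong) (auto simp: algebra_simps)
  also have "\<dots> = bisector_coord m b c x - t * sqdist m b c"
    unfolding bisector_coord_def sqdist_eq_sum_mult by (simp add: sum_subtractf sum_distrib_left)
  finally show ?thesis using assms unfolding t_def by simp
qed

lemma reflection_reflection:
  assumes "sqdist m b c \<noteq> 0"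
  shows "reflection m b c (reflection m b c x) = x"
  using bisector_coord_reflection[OF assms] unfolding reflection_def[of m b c "reflection m b c x"]
  by (simp add: reflection_def)

lemma bisector_coord_diff:
  "bisector_coord m b c x - bisector_coord m b c y = (\<Sum>i<m. (x i - y i) * (b i - c i))"
  unfolding bisector_coord_def sum_subtractf[symmetric] by (rule sum.cong) (auto simp: algebra_simps)

lemma bisector_coord_eq: "bisector_coord m b c x = (sqdist m x c - sqdist m x b) / 2"
  unfolding bisector_coord_def sqdist_def sum_subtractf[symmetric] sum_divide_distrib
  by (rule sum.cong) (auto simp: power2_eq_square field_simps)

lemma sqdist_reflection:
  assumes "sqdist m b c \<noteq> 0"
  shows "sqdist m (reflection m b c x) (reflection m b c y) = sqdist m x y"
proof -
  define W where "W = sqdist m b c"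
  define t where "t v = 2 * bisector_coord m b c v / W" for v
  define Q where "Q = (\<Sum>i<m. (x i - y i) * (b i - c i))"
  have R: "reflection m b c v = (\<lambda>i. v i - t v * (b i - c i))" for v
    unfolding reflection_def t_def W_def ..
  have tt: "t x - t y = 2 * Q / W"
    unfolding t_def Q_def diff_divide_distrib[symmetric] right_diff_distrib[symmetric]
      bisector_coord_diff ..
  have "sqdist m (reflection m b c x) (reflection m b c y)
      = (\<Sum>i<m. (x i - y i)^2 - 2 * (t x - t y) * ((x i - y i) * (b i - c i))
                + (t x - t y)^2 * ((b i - c i) * (b i - c i)))"
    unfolding sqdist_def R by (rule sum.cong) (auto simp: power2_eq_square algebra_simps)
  also have "\<dots> = sqdist m x y - 2 * (t x - t y) * Q + (t x - t y)^2 * W"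
    unfolding sqdist_def[of m x y] Q_def W_def sqdist_eq_sum_mult
    by (simp add: sum.distrib sum_subtractf sum_distrib_left power2_eq_square)
  also have "\<dots> = sqdist m x y"
    unfolding tt using assms by (simp add: W_def field_simps power2_eq_square)
  finally show ?thesis .
qed

lemma euclid_isometry_reflection:
  assumes "b \<in> euclid m" "c \<in> euclid m" "b \<noteq> c"
  shows "euclid_isometry m (reflection m b c)"
proof -
  have W: "sqdist m b c \<noteq> 0" using sqdist_pos[OF assms] by simp
  have "reflection m b c x \<in> euclid m" if "x \<in> euclid m" for x
    using that assms(1,2) unfolding euclid_def reflection_def by auto
  then show ?thesis unfolding euclid_isometry_def
    by (intro conjI ballI sqdist_reflection[OF W] bij_betw_byWitness[where f'="reflection m b c"])
      (auto simp: reflection_reflection[OF W])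
qed

lemma reflection_swaps:
  assumes "sqdist m b c \<noteq> 0"
  shows "reflection m b c b = c"
  using assms unfolding reflection_def bisector_coord_eq by (simp add: sqdist_commute)

lemma reflection_fixes_bisector:
  assumes "sqdist m z b = sqdist m z c"
  shows "reflection m b c z = z"
  using assms unfolding reflection_def bisector_coord_eq by simp

lemma congruent_configuration_isometry:
  fixes n :: nat and u a :: "nat \<Rightarrow> nat \<Rightarrow> real"
  assumes u: "\<forall>i\<le>n. u i \<in> euclid m" and a: "\<forall>i\<le>n. a i \<in> euclid m"
    and dist: "\<forall>i\<le>n. \<forall>j\<le>n. sqdist m (u i) (u j) = sqdist m (a i) (a j)"
  obtains F where "euclid_isometry m F" "\<forall>i\<le>n. F (u i) = a i"
proof -
  have "\<exists>F. euclid_isometry m F \<and> (\<forall>i<r. F (u i) = a i)" if "r \<le> Suc n" for r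
    using that
  proof (induction r)
    case 0
    then show ?case using euclid_isometry_id by blast
  next
    case (Suc r)
    then obtain F where F: "euclid_isometry m F" "\<forall>i<r. F (u i) = a i" by auto
    have "r \<le> n" using Suc.prems by simp
    define b where "b = F (u r)"
    have "b \<in> euclid m"
      unfolding b_def using F(1) u \<open>r \<le> n\<close> unfolding euclid_isometry_def by (auto dest: bij_betwE)
    have "a r \<in> euclid m" using a \<open>r \<le> n\<close> by auto
    have equidistant: "sqdist m (a j) b = sqdist m (a j) (a r)" if "j < r" for j
    proof -
      have "sqdist m (a j) b = sqdist m (F (u j)) (F (u r))" using F(2) that b_def by simp
      also have "\<dots> = sqdist m (u j) (u r)"
        using F(1) u \<open>r \<le> n\<close> that unfolding euclid_isometry_def by auto
      also have "\<dots> = sqdist m (a j) (a r)" using dist \<open>r \<le> n\<close> that by auto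
      finally show ?thesis .
    qed
    show ?case
    proof (cases "b = a r")
      case True
      then show ?thesis using F b_def less_Suc_eq by metis
    next
      case False
      have W: "sqdist m b (a r) \<noteq> 0" using sqdist_pos[OF \<open>b \<in> euclid m\<close> \<open>a r \<in> euclid m\<close> False] by simp
      have "euclid_isometry m (reflection m b (a r) \<circ> F)"
        using euclid_isometry_comp[OF F(1) euclid_isometry_reflection] \<open>b \<in> euclid m\<close> \<open>a r \<in> euclid m\<close> False
        by blast
      moreover have "(reflection m b (a r) \<circ> F) (u i) = a i" if "i < Suc r" for i
      proof (cases "i = r")
        case True
        then show ?thesis using reflection_swaps[OF W] b_def by simp
      next
        case False
        then have "i < r" using that by simp
        then show ?thesis using F(2) reflection_fixes_bisector equidistant by simp
      qed
      ultimately show ?thesis by blast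
    qed
  qed
  from this[of "Suc n"] that show ?thesis by auto
qed

lemma euclid_isometry_inverse:
  assumes "euclid_isometry m F"
  obtains F' where "\<forall>x\<in>euclid m. F' x \<in> euclid m \<and> F (F' x) = x \<and> F' (F x) = x"
proof
  have bij: "bij_betw F (euclid m) (euclid m)" using assms unfolding euclid_isometry_def by simp
  show "\<forall>x\<in>euclid m. the_inv_into (euclid m) F x \<in> euclid m \<and>
      F (the_inv_into (euclid m) F x) = x \<and> the_inv_into (euclid m) F (F x) = x"
    using bij by (auto simp: bij_betw_def the_inv_into_into the_inv_into_f_f f_the_inv_into_f)
qed

lemma group_action_restrict:
  assumes G: "group G"
    and closed: "\<And>g x. g \<in> carrier G \<Longrightarrow> x \<in> E \<Longrightarrow> T g x \<in> E"
    and mult: "\<And>g h x. g \<in> carrier G \<Longrightarrow> h \<in> carrier G \<Longrightarrow> x \<in> E \<Longrightarrow>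
                 T (g \<otimes>\<^bsub>G\<^esub> h) x = T g (T h x)"
    and one: "\<And>x. x \<in> E \<Longrightarrow> T \<one>\<^bsub>G\<^esub> x = x"
  shows "group_action G E (\<lambda>g. \<lambda>x\<in>E. T g x)"
proof -
  have bij: "(\<lambda>x\<in>E. T g x) \<in> Bij E" if g: "g \<in> carrier G" for g
  proof -
    have ig: "inv\<^bsub>G\<^esub> g \<in> carrier G" using G g by (simp add: group.inv_closed)
    have "bij_betw (T g) E E"
    proof (rule bij_betw_byWitness[where f'="T (inv\<^bsub>G\<^esub> g)"])
      show "\<forall>x\<in>E. T (inv\<^bsub>G\<^esub> g) (T g x) = x"
        using mult[OF ig g] one G g by (simp add: group.l_inv)
      show "\<forall>x\<in>E. T g (T (inv\<^bsub>G\<^esub> g) x) = x"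
        using mult[OF g ig] one G g by (simp add: group.r_inv)
    qed (use closed g ig in auto)
    then have "bij_betw (\<lambda>x\<in>E. T g x) E E" by (rule bij_betw_cong[THEN iffD1, rotated]) auto
    then show ?thesis unfolding Bij_def by auto
  qed
  show ?thesis
    unfolding group_action_def group_hom_def group_hom_axioms_def
  proof (intro conjI G group_BijGroup homI)
    show "(\<lambda>x\<in>E. T g x) \<in> carrier (BijGroup E)" if "g \<in> carrier G" for g
      using bij[OF that] by (simp add: BijGroup_def)
    fix g h assume g: "g \<in> carrier G" and h: "h \<in> carrier G"
    show "(\<lambda>x\<in>E. T (g \<otimes>\<^bsub>G\<^esub> h) x) = (\<lambda>x\<in>E. T g x) \<otimes>\<^bsub>BijGroup E\<^esub> (\<lambda>x\<in>E. T h x)"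
      using bij[OF g] bij[OF h] mult[OF g h] closed[OF h] by (auto simp: BijGroup_def compose_def)
  qed
qed

text \<open>An isometry of R^m carrying the orbit points T (g i) w onto the a i conjugates T into an
  isometric action with the a i in one orbit.\<close>
lemma sub_p_toral_if_congruent_to_orbit:
  fixes G :: "(nat \<Rightarrow> int) monoid" and n m :: nat and a :: "nat \<Rightarrow> nat \<Rightarrow> real"
  assumes "p_torus p G" "group G" "n \<le> m"
    and closed: "\<And>g x. g \<in> carrier G \<Longrightarrow> x \<in> euclid m \<Longrightarrow> T g x \<in> euclid m"
    and mult: "\<And>g h x. g \<in> carrier G \<Longrightarrow> h \<in> carrier G \<Longrightarrow> x \<in> euclid m \<Longrightarrow>
                 T (g \<otimes>\<^bsub>G\<^esub> h) x = T g (T h x)"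
    and one: "\<And>x. x \<in> euclid m \<Longrightarrow> T \<one>\<^bsub>G\<^esub> x = x"
    and iso: "\<And>g x y. g \<in> carrier G \<Longrightarrow> x \<in> euclid m \<Longrightarrow> y \<in> euclid m \<Longrightarrow>
                 sqdist m (T g x) (T g y) = sqdist m x y"
    and w: "w \<in> euclid m" and g: "\<forall>i\<le>n. g i \<in> carrier G" and a: "\<forall>i\<le>n. a i \<in> euclid n"
    and dist: "\<forall>i\<le>n. \<forall>j\<le>n. sqdist m (T (g i) w) (T (g j) w) = sqdist n (a i) (a j)"
  shows "sub_p_toral p n (a ` {..n})"
proof -
  have a_m: "\<forall>i\<le>n. a i \<in> euclid m" using a \<open>n \<le> m\<close> unfolding euclid_def by auto
  obtain F where F: "euclid_isometry m F" "\<forall>i\<le>n. F (T (g i) w) = a i"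
  proof (rule congruent_configuration_isometry)
    show "\<forall>i\<le>n. T (g i) w \<in> euclid m" using closed g w by blast
    show "\<forall>i\<le>n. \<forall>j\<le>n. sqdist m (T (g i) w) (T (g j) w) = sqdist m (a i) (a j)"
      using dist a sqdist_euclid_le[OF _ _ \<open>n \<le> m\<close>] by simp
  qed (use a_m in auto)
  obtain F' where F': "\<forall>x\<in>euclid m. F' x \<in> euclid m \<and> F (F' x) = x \<and> F' (F x) = x"
    using euclid_isometry_inverse[OF F(1)] .
  have F_closed: "F x \<in> euclid m" if "x \<in> euclid m" for x
    using F(1) that unfolding euclid_isometry_def by (auto dest: bij_betwE)
  have F_iso: "sqdist m (F x) (F y) = sqdist m x y" if "x \<in> euclid m" "y \<in> euclid m" for x y
    using F(1) that unfolding euclid_isometry_def by simp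
  define T' where "T' g x = F (T g (F' x))" for g x
  define \<phi> where "\<phi> g = (\<lambda>x\<in>euclid m. T' g x)" for g
  have "group_action G (euclid m) \<phi>"
    unfolding \<phi>_def T'_def
    by (rule group_action_restrict[OF \<open>group G\<close>]) (simp_all add: F' F_closed closed mult one)
  moreover have "edist m (\<phi> h x) (\<phi> h y) = edist m x y"
    if "h \<in> carrier G" "x \<in> euclid m" "y \<in> euclid m" for h x y
    using that F' closed by (simp add: \<phi>_def T'_def edist_eq_sqrt_sqdist F_iso iso flip: F_iso[of "F' x"])
  moreover have "a ` {..n} \<subseteq> orbit G \<phi> (F w)"
  proof
    fix y assume "y \<in> a ` {..n}"
    then obtain i where "i \<le> n" "y = a i" by auto
    then have "\<phi> (g i) (F w) = y" using F(2) F' w F_closed by (simp add: \<phi>_def T'_def)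
    then show "y \<in> orbit G \<phi> (F w)" unfolding orbit_def using g \<open>i \<le> n\<close> by blast
  qed
  ultimately show ?thesis
    unfolding sub_p_toral_def using assms(1,3) a F_closed[OF w] by blast
qed

abbreviation torus_group :: "nat \<Rightarrow> nat \<Rightarrow> (nat \<Rightarrow> int) monoid" where
  "torus_group K p \<equiv> product_group {..<K} (\<lambda>_. integer_mod_group p)"

lemma p_torus_torus_group: "K \<ge> 1 \<Longrightarrow> p_torus p (torus_group K p)"
  unfolding p_torus_def by auto

definition rotation_angle :: "nat \<Rightarrow> (nat \<Rightarrow> int) \<Rightarrow> nat \<Rightarrow> real" where
  "rotation_angle p g q = 2 * pi * of_int (g q) / real p"

definition torus_rotation :: "nat \<Rightarrow> nat \<Rightarrow> (nat \<Rightarrow> int) \<Rightarrow> (nat \<Rightarrow> real) \<Rightarrow> (nat \<Rightarrow> real)" where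
  "torus_rotation K p g x = (\<lambda>i. if i < 2 * K then
      (let q = i div 2; \<theta> = rotation_angle p g q in
       if even i then cos \<theta> * x (2 * q) - sin \<theta> * x (2 * q + 1)
       else sin \<theta> * x (2 * q) + cos \<theta> * x (2 * q + 1))
     else x i)"

lemma torus_rotation_even:
  "q < K \<Longrightarrow> torus_rotation K p g x (2 * q) =
     cos (rotation_angle p g q) * x (2 * q) - sin (rotation_angle p g q) * x (2 * q + 1)"
  unfolding torus_rotation_def by (simp add: Let_def)

lemma torus_rotation_odd:
  "q < K \<Longrightarrow> torus_rotation K p g x (2 * q + 1) =
     sin (rotation_angle p g q) * x (2 * q) + cos (rotation_angle p g q) * x (2 * q + 1)"
  unfolding torus_rotation_def by (simp add: Let_def)

lemma torus_rotation_closed: "x \<in> euclid (2 * K) \<Longrightarrow> torus_rotation K p g x \<in> euclid (2 * K)"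
  unfolding euclid_def torus_rotation_def by auto

lemma torus_rotation_one: "torus_rotation K p \<one>\<^bsub>torus_group K p\<^esub> x = x"
  unfolding torus_rotation_def rotation_angle_def by (auto intro!: ext simp: Let_def mult_2[symmetric])

lemma cos_sin_rotation_angle_mod:
  assumes "p > 0"
  shows "cos (2 * pi * of_int (s mod int p) / real p) = cos (2 * pi * of_int s / real p)"
    "sin (2 * pi * of_int (s mod int p) / real p) = sin (2 * pi * of_int s / real p)"
proof -
  have "real_of_int s = real_of_int (s mod int p) + real p * real_of_int (s div int p)"
    by (metis mod_mult_div_eq of_int_add of_int_mult of_int_of_nat_eq add.commute)
  then have e: "2 * pi * of_int (s mod int p) / real p = 2 * pi * of_int s / real p - 2 * pi * of_int (s div int p)"
    using assms by (simp add: field_simps)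
  show "cos (2 * pi * of_int (s mod int p) / real p) = cos (2 * pi * of_int s / real p)"
    unfolding e cos_diff by (simp add: cos_int_2pin sin_int_2pin)
  show "sin (2 * pi * of_int (s mod int p) / real p) = sin (2 * pi * of_int s / real p)"
    unfolding e sin_diff by (simp add: cos_int_2pin sin_int_2pin)
qed

lemma rotation_angle_mult:
  assumes "p > 0" "q < K"
  shows "cos (rotation_angle p (g \<otimes>\<^bsub>torus_group K p\<^esub> h) q) = cos (rotation_angle p g q + rotation_angle p h q)"
    "sin (rotation_angle p (g \<otimes>\<^bsub>torus_group K p\<^esub> h) q) = sin (rotation_angle p g q + rotation_angle p h q)"
  using cos_sin_rotation_angle_mod[OF assms(1), of "g q + h q"] assms
  by (simp_all add: rotation_angle_def add_divide_distrib distrib_left)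

lemma torus_rotation_mult:
  assumes "p > 0"
  shows "torus_rotation K p (g \<otimes>\<^bsub>torus_group K p\<^esub> h) x = torus_rotation K p g (torus_rotation K p h x)"
proof
  fix i
  show "torus_rotation K p (g \<otimes>\<^bsub>torus_group K p\<^esub> h) x i = torus_rotation K p g (torus_rotation K p h x) i"
  proof (cases "i < 2 * K")
    case True
    define q where "q = i div 2"
    have q: "q < K" using True q_def by simp
    consider "i = 2 * q" | "i = 2 * q + 1" unfolding q_def by linarith
    then show ?thesis
      by cases (simp_all only: torus_rotation_even[OF q] torus_rotation_odd[OF q]
          rotation_angle_mult[OF assms q] cos_add sin_add, simp_all add: algebra_simps)
  next
    case False
    then show ?thesis unfolding torus_rotation_def by simp
  qed
qed

lemma sum_even_odd_pairs: "(\<Sum>i<2 * K. f i) = (\<Sum>q<K. f (2 * q) + f (2 * q + 1 :: nat) :: real)"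
  using sum_split_even_odd[where n=K and f=f and g=f] by (simp add: sum.distrib)

lemma sqdist_torus_rotation:
  "sqdist (2 * K) (torus_rotation K p g x) (torus_rotation K p g y) = sqdist (2 * K) x y"
proof -
  have "(torus_rotation K p g x (2 * q) - torus_rotation K p g y (2 * q))^2
        + (torus_rotation K p g x (2 * q + 1) - torus_rotation K p g y (2 * q + 1))^2
      = (x (2 * q) - y (2 * q))^2 + (x (2 * q + 1) - y (2 * q + 1))^2" if q: "q < K" for q
  proof -
    define c s where "c = cos (rotation_angle p g q)" and "s = sin (rotation_angle p g q)"
    have "c^2 + s^2 = 1" unfolding c_def s_def by simp
    moreover have "(c * x (2*q) - s * x (2*q+1) - (c * y (2*q) - s * y (2*q+1)))^2 +
          (s * x (2*q) + c * x (2*q+1) - (s * y (2*q) + c * y (2*q+1)))^2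
         = (c^2 + s^2) * ((x (2*q) - y (2*q))^2 + (x (2*q+1) - y (2*q+1))^2)"
      by (simp add: power2_eq_square algebra_simps)
    ultimately show ?thesis
      unfolding torus_rotation_even[OF q] torus_rotation_odd[OF q] c_def[symmetric] s_def[symmetric]
      by simp
  qed
  then show ?thesis unfolding sqdist_def sum_even_odd_pairs by (intro sum.cong) auto
qed

lemma cos_sin_chord:
  fixes \<theta> \<eta> r :: real
  shows "(cos \<theta> * r - cos \<eta> * r)^2 + (sin \<theta> * r - sin \<eta> * r)^2 = r^2 * (2 - 2 * cos (\<theta> - \<eta>))"
proof -
  have "(sin \<theta>)^2 + (cos \<theta>)^2 = 1" "(sin \<eta>)^2 + (cos \<eta>)^2 = 1" by simp_all
  then show ?thesis unfolding cos_diff by algebra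
qed

text \<open>A plane where the labels of g and h differ contributes the squared chord of the angle
  2 pi / p, scaled to c q by the length of the q-th component of w.\<close>
lemma torus_orbit_weighted_hamming:
  fixes c :: "nat \<Rightarrow> real"
  assumes "p \<ge> 2" "\<forall>q<K. c q \<ge> 0"
  obtains w where "w \<in> euclid (2 * K)"
    "\<And>g h :: nat \<Rightarrow> int. \<forall>q<K. g q \<in> {0, 1} \<and> h q \<in> {0, 1} \<Longrightarrow>
       sqdist (2 * K) (torus_rotation K p g w) (torus_rotation K p h w) = (\<Sum>q<K. c q * of_bool (g q \<noteq> h q))"
proof
  define \<kappa> where "\<kappa> = 2 - 2 * cos (2 * pi / real p)"
  have "cos (2 * pi / real p) < cos 0"
    by (rule cos_monotone_0_pi) (use assms(1) in \<open>auto simp: field_simps\<close>)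
  then have "\<kappa> > 0" unfolding \<kappa>_def by simp
  define w where "w = (\<lambda>i. if i < 2 * K \<and> even i then sqrt (c (i div 2) / \<kappa>) else 0)"
  show "w \<in> euclid (2 * K)" unfolding w_def euclid_def by auto
  fix g h :: "nat \<Rightarrow> int" assume gh: "\<forall>q<K. g q \<in> {0, 1} \<and> h q \<in> {0, 1}"
  have "(torus_rotation K p g w (2 * q) - torus_rotation K p h w (2 * q))^2
      + (torus_rotation K p g w (2 * q + 1) - torus_rotation K p h w (2 * q + 1))^2
      = c q * of_bool (g q \<noteq> h q)" if q: "q < K" for q
  proof -
    define r where "r = sqrt (c q / \<kappa>)"
    have U: "torus_rotation K p f w (2 * q) = cos (rotation_angle p f q) * r"
      "torus_rotation K p f w (2 * q + 1) = sin (rotation_angle p f q) * r" for f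
    proof -
      have "w (2 * q) = r" "w (2 * q + 1) = 0" unfolding w_def r_def using q by simp_all
      then show "torus_rotation K p f w (2 * q) = cos (rotation_angle p f q) * r"
        "torus_rotation K p f w (2 * q + 1) = sin (rotation_angle p f q) * r"
        unfolding torus_rotation_even[OF q] torus_rotation_odd[OF q] by simp_all
    qed
    have diff: "rotation_angle p g q - rotation_angle p h q = 2 * pi * of_int (g q - h q) / real p"
      unfolding rotation_angle_def by (simp add: diff_divide_distrib right_diff_distrib)
    have "g q - h q \<in> {-1, 0, 1}" using gh q by auto
    then have "cos (rotation_angle p g q - rotation_angle p h q) =
        (if g q = h q then 1 else cos (2 * pi / real p))"
      unfolding diff by (elim insertE) auto
    moreover have "r^2 * \<kappa> = c q" unfolding r_def using assms(2) q \<open>\<kappa> > 0\<close> by simp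
    ultimately show ?thesis unfolding U cos_sin_chord \<kappa>_def by auto
  qed
  then show "sqdist (2 * K) (torus_rotation K p g w) (torus_rotation K p h w) = (\<Sum>q<K. c q * of_bool (g q \<noteq> h q))"
    unfolding sqdist_def sum_even_odd_pairs by (intro sum.cong) auto
qed

lemma sub_p_toral_if_cut_decomposable:
  fixes a :: "nat \<Rightarrow> nat \<Rightarrow> real" and cut :: "nat \<Rightarrow> nat \<Rightarrow> bool"
  assumes "prime p" "K \<ge> 1" "n \<le> 2 * K" "\<forall>i\<le>n. a i \<in> euclid n" "\<forall>q<K. c q \<ge> 0"
    and dist: "\<forall>i\<le>n. \<forall>j\<le>n. i \<noteq> j \<longrightarrow>
      sqdist n (a i) (a j) = (\<Sum>q<K. c q * of_bool (cut i q \<noteq> cut j q))"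
  shows "sub_p_toral p n (a ` {..n})"
proof -
  have "p \<ge> 2" using assms(1) by (simp add: prime_ge_2_nat)
  obtain w where w: "w \<in> euclid (2 * K)"
    and hamming: "\<And>g h :: nat \<Rightarrow> int. \<forall>q<K. g q \<in> {0, 1} \<and> h q \<in> {0, 1} \<Longrightarrow>
       sqdist (2 * K) (torus_rotation K p g w) (torus_rotation K p h w) = (\<Sum>q<K. c q * of_bool (g q \<noteq> h q))"
    using torus_orbit_weighted_hamming[OF \<open>p \<ge> 2\<close> assms(5)] by blast
  define g where "g i = (\<lambda>q\<in>{..<K}. of_bool (cut i q) :: int)" for i
  have "g i \<in> carrier (torus_group K p)" for i
    using \<open>p \<ge> 2\<close> unfolding g_def by (auto simp: carrier_integer_mod_group)
  moreover have "sqdist (2 * K) (torus_rotation K p (g i) w) (torus_rotation K p (g j) w) = sqdist n (a i) (a j)"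
    if "i \<le> n" "j \<le> n" for i j
  proof (cases "i = j")
    case False
    have "sqdist (2 * K) (torus_rotation K p (g i) w) (torus_rotation K p (g j) w)
        = (\<Sum>q<K. c q * of_bool (cut i q \<noteq> cut j q))"
      by (subst hamming) (auto simp: g_def intro!: sum.cong)
    then show ?thesis using dist that False by simp
  qed simp
  ultimately show ?thesis
  proof (intro sub_p_toral_if_congruent_to_orbit[where T="torus_rotation K p" and m="2 * K"] allI impI)
    show "p_torus p (torus_group K p)" using assms(2) by (rule p_torus_torus_group)
    show "group (torus_group K p)" by simp
    show "torus_rotation K p f x \<in> euclid (2 * K)" if "x \<in> euclid (2 * K)" for f x
      using that by (rule torus_rotation_closed)
    show "torus_rotation K p (f \<otimes>\<^bsub>torus_group K p\<^esub> f') x = torus_rotation K p f (torus_rotation K p f' x)"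
      for f f' x using \<open>p \<ge> 2\<close> by (intro torus_rotation_mult) simp
    show "torus_rotation K p \<one>\<^bsub>torus_group K p\<^esub> x = x" for x by (rule torus_rotation_one)
    show "sqdist (2 * K) (torus_rotation K p f x) (torus_rotation K p f y) = sqdist (2 * K) x y"
      for f x y by (rule sqdist_torus_rotation)
  qed (use assms(3,4) w in blast)+
qed

lemma sum_lessThan_add_nat:
  fixes M N :: nat shows "(\<Sum>q<M + N. f q) = (\<Sum>q<M. f q) + (\<Sum>r<N. f (M + r) :: real)"
  by (induction N) auto

lemma sum_lessThan_mult_nat:
  fixes M N :: nat shows "(\<Sum>r<M * N. f r) = (\<Sum>k<M. \<Sum>l<N. f (k * N + l) :: real)"
proof (induction M)
  case (Suc M)
  have "(\<Sum>r<Suc M * N. f r) = (\<Sum>r<M * N + N. f r)" by (simp add: add.commute)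
  also have "\<dots> = (\<Sum>r<M * N. f r) + (\<Sum>l<N. f (M * N + l))" by (rule sum_lessThan_add_nat)
  finally show ?case using Suc by simp
qed simp

lemma sum_separating_singletons:
  fixes b :: "nat \<Rightarrow> real"
  assumes "i \<noteq> j" "i < N" "j < N"
  shows "(\<Sum>q<N. b q * of_bool ((i = q) \<noteq> (j = q))) = b i + b j"
proof -
  have "(\<Sum>q<N. b q * of_bool ((i = q) \<noteq> (j = q))) = (\<Sum>q<N. (if q = i then b i else 0) + (if q = j then b j else 0))"
    using assms by (intro sum.cong) auto
  also have "\<dots> = b i + b j" using assms by (simp add: sum.distrib)
  finally show ?thesis .
qed

lemma sum_separating_pairs:
  fixes f :: "nat \<Rightarrow> nat \<Rightarrow> real"
  assumes "i \<noteq> j" "i < N" "j < N"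
  shows "(\<Sum>k<N. \<Sum>l<N. f k l * of_bool ((i = k \<or> i = l) \<noteq> (j = k \<or> j = l)))
     = (\<Sum>l<N. f i l) + (\<Sum>k<N. f k i) - f i i + (\<Sum>l<N. f j l) + (\<Sum>k<N. f k j) - f j j
       - 2 * f i j - 2 * f j i"
proof -
  have row: "(\<Sum>l<N. f k l * of_bool ((i = k \<or> i = l) \<noteq> (j = k \<or> j = l)))
      = f k i + f k j + (if k = i then (\<Sum>l<N. f i l) - 2 * f i j - f i i else 0)
          + (if k = j then (\<Sum>l<N. f j l) - 2 * f j i - f j j else 0)" if "k < N" for k
  proof -
    consider "k = i" | "k = j" | "k \<noteq> i" "k \<noteq> j" by blast
    then show ?thesis
    proof cases
      case 1
      have "(\<Sum>l<N. f k l * of_bool ((i = k \<or> i = l) \<noteq> (j = k \<or> j = l)))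
          = (\<Sum>l<N. f i l - (if l = j then f i j else 0))"
        using 1 assms by (intro sum.cong) auto
      then show ?thesis using 1 assms by (simp add: sum_subtractf)
    next
      case 2
      have "(\<Sum>l<N. f k l * of_bool ((i = k \<or> i = l) \<noteq> (j = k \<or> j = l)))
          = (\<Sum>l<N. f j l - (if l = i then f j i else 0))"
        using 2 assms by (intro sum.cong) auto
      then show ?thesis using 2 assms by (simp add: sum_subtractf)
    next
      case 3
      have "(\<Sum>l<N. f k l * of_bool ((i = k \<or> i = l) \<noteq> (j = k \<or> j = l)))
          = (\<Sum>l<N. (if l = i then f k i else 0) + (if l = j then f k j else 0))"
        using 3 assms by (intro sum.cong) auto
      then show ?thesis using 3 assms by (simp add: sum.distrib)
    qed
  qed
  have "(\<Sum>k<N. \<Sum>l<N. f k l * of_bool ((i = k \<or> i = l) \<noteq> (j = k \<or> j = l)))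
      = (\<Sum>k<N. f k i + f k j + (if k = i then (\<Sum>l<N. f i l) - 2 * f i j - f i i else 0)
          + (if k = j then (\<Sum>l<N. f j l) - 2 * f j i - f j j else 0))"
    using row by (intro sum.cong) auto
  also have "\<dots> = (\<Sum>k<N. f k i) + (\<Sum>k<N. f k j) + ((\<Sum>l<N. f i l) - 2 * f i j - f i i)
        + ((\<Sum>l<N. f j l) - 2 * f j i - f j j)"
    using assms by (simp add: sum.distrib)
  finally show ?thesis by simp
qed

text \<open>The N + N^2 cuts of the vertex set {0..<N}: index q < N is the singleton {q}, and index
  N + k N + l is the pair {k, l}.\<close>
definition vertex_pair_cut :: "nat \<Rightarrow> nat \<Rightarrow> nat \<Rightarrow> bool" where
  "vertex_pair_cut N i q = (if q < N then i = q else i = (q - N) div N \<or> i = (q - N) mod N)"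

lemma sum_vertex_pair_cut:
  fixes c :: "nat \<Rightarrow> real"
  assumes "i \<noteq> j" "i < N" "j < N"
  shows "(\<Sum>q<N + N * N. c q * of_bool (vertex_pair_cut N i q \<noteq> vertex_pair_cut N j q))
    = c i + c j + (\<Sum>k<N. \<Sum>l<N. c (N + (k * N + l)) * of_bool ((i = k \<or> i = l) \<noteq> (j = k \<or> j = l)))"
proof -
  have "(\<Sum>q<N. c q * of_bool (vertex_pair_cut N i q \<noteq> vertex_pair_cut N j q))
      = (\<Sum>q<N. c q * of_bool ((i = q) \<noteq> (j = q)))"
    by (intro sum.cong) (auto simp: vertex_pair_cut_def)
  moreover have "(\<Sum>r<N * N. c (N + r) * of_bool (vertex_pair_cut N i (N + r) \<noteq> vertex_pair_cut N j (N + r)))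
      = (\<Sum>k<N. \<Sum>l<N. c (N + (k * N + l)) * of_bool ((i = k \<or> i = l) \<noteq> (j = k \<or> j = l)))"
    unfolding sum_lessThan_mult_nat by (intro sum.cong refl) (auto simp: vertex_pair_cut_def)
  ultimately show ?thesis
    unfolding sum_lessThan_add_nat using sum_separating_singletons[OF assms] by simp
qed

text \<open>With e the deviation of d from D, singletons get weight \<beta> + (\<Sum>t. e k t)/2 and pairs
  weight \<alpha> - e k l / 4; two vertices i, j are then separated by total weight
  2 \<beta> + (4 N - 6) \<alpha> + e i j = d i j, and all weights stay nonnegative since |e| \<le> D / (2 N).\<close>
lemma near_regular_cut_decomposition:
  fixes d :: "nat \<Rightarrow> nat \<Rightarrow> real" and N :: nat
  assumes "D > 0" "N > 0"
    and sym: "\<forall>k<N. \<forall>l<N. d k l = d l k"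
    and near: "\<forall>k<N. \<forall>l<N. k \<noteq> l \<longrightarrow> \<bar>d k l - D\<bar> \<le> D / (2 * N)"
  obtains c where "\<forall>q<N + N * N. c q \<ge> 0"
    "\<forall>i<N. \<forall>j<N. i \<noteq> j \<longrightarrow>
       (\<Sum>q<N + N * N. c q * of_bool (vertex_pair_cut N i q \<noteq> vertex_pair_cut N j q)) = d i j"
proof
  define e where "e k l = (if k = l then 0 else d k l - D)" for k l
  define E where "E k = (\<Sum>t<N. e k t)" for k
  define \<alpha> where "\<alpha> = D / (8 * N)"
  define \<beta> where "\<beta> = (D - (4 * N - 6) * \<alpha>) / 2"
  define c where "c q = (if q < N then \<beta> + E q / 2 else \<alpha> - e ((q - N) div N) ((q - N) mod N) / 4)" for q
  have "real N \<ge> 1" using assms(2) by simp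
  have e_sym: "e k l = e l k" if "k < N" "l < N" for k l using sym that unfolding e_def by auto
  have e_bound: "\<bar>e k l\<bar> \<le> D / (2 * N)" if "k < N" "l < N" for k l
    using near that assms(1) unfolding e_def by auto
  show "\<forall>q<N + N * N. c q \<ge> 0"
  proof (intro allI impI)
    fix q assume q: "q < N + N * N"
    show "c q \<ge> 0"
    proof (cases "q < N")
      case True
      have "- (D / (2 * N)) \<le> e q t" if "t < N" for t using e_bound[OF True that] by linarith
      then have "(\<Sum>t<N. - (D / (2 * N))) \<le> E q" unfolding E_def by (intro sum_mono) simp
      then have "E q \<ge> - D / 2" using \<open>real N \<ge> 1\<close> by simp
      moreover have "\<beta> \<ge> D / 4"
        unfolding \<beta>_def \<alpha>_def using \<open>real N \<ge> 1\<close> assms(1) by (simp add: field_simps)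
      ultimately show ?thesis unfolding c_def using True by simp
    next
      case False
      then have "(q - N) div N < N" using q by (simp add: less_mult_imp_div_less)
      moreover have "(q - N) mod N < N" using assms(2) by simp
      ultimately have "\<bar>e ((q - N) div N) ((q - N) mod N)\<bar> \<le> D / (2 * N)" by (rule e_bound)
      then show ?thesis unfolding c_def \<alpha>_def using False by simp
    qed
  qed
  show "\<forall>i<N. \<forall>j<N. i \<noteq> j \<longrightarrow>
      (\<Sum>q<N + N * N. c q * of_bool (vertex_pair_cut N i q \<noteq> vertex_pair_cut N j q)) = d i j"
  proof (intro allI impI)
    fix i j assume ij: "i < N" "j < N" "i \<noteq> j"
    define f where "f k l = \<alpha> - e k l / 4" for k l
    have pair_weight: "c (N + (k * N + l)) = f k l" if "k < N" "l < N" for k l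
      using that unfolding c_def f_def by simp
    have row: "(\<Sum>l<N. f t l) = N * \<alpha> - E t / 4" for t
      unfolding f_def E_def by (simp add: sum_subtractf sum_divide_distrib)
    have col: "(\<Sum>k<N. f k t) = N * \<alpha> - E t / 4" if "t < N" for t
      unfolding f_def E_def using e_sym that by (simp add: sum_subtractf sum_divide_distrib)
    have "(\<Sum>q<N + N * N. c q * of_bool (vertex_pair_cut N i q \<noteq> vertex_pair_cut N j q))
        = c i + c j + (\<Sum>k<N. \<Sum>l<N. f k l * of_bool ((i = k \<or> i = l) \<noteq> (j = k \<or> j = l)))"
      unfolding sum_vertex_pair_cut[OF ij(3,1,2)] using pair_weight by simp
    also have "\<dots> = 2 * \<beta> + (4 * N - 6) * \<alpha> + e i j"
      unfolding sum_separating_pairs[OF ij(3,1,2)] row col[OF ij(1)] col[OF ij(2)]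
      using ij e_sym[OF ij(1,2)] by (simp add: c_def f_def e_def algebra_simps)
    also have "\<dots> = d i j" unfolding \<beta>_def e_def using ij by (simp add: field_simps)
    finally show "(\<Sum>q<N + N * N. c q * of_bool (vertex_pair_cut N i q \<noteq> vertex_pair_cut N j q)) = d i j" .
  qed
qed

lemma sub_p_toral_if_near_regular:
  fixes a :: "nat \<Rightarrow> nat \<Rightarrow> real" and n :: nat
  assumes "prime p" "D > 0" "\<forall>i\<le>n. a i \<in> euclid n"
    and near: "\<forall>k\<le>n. \<forall>l\<le>n. k \<noteq> l \<longrightarrow> \<bar>sqdist n (a k) (a l) - D\<bar> \<le> D / (2 * Suc n)"
  shows "sub_p_toral p n (a ` {..n})"
proof -
  obtain c where "\<forall>q<Suc n + Suc n * Suc n. c q \<ge> 0"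
    "\<forall>i<Suc n. \<forall>j<Suc n. i \<noteq> j \<longrightarrow> (\<Sum>q<Suc n + Suc n * Suc n.
       c q * of_bool (vertex_pair_cut (Suc n) i q \<noteq> vertex_pair_cut (Suc n) j q)) = sqdist n (a i) (a j)"
    using near_regular_cut_decomposition[of D "Suc n" "\<lambda>k l. sqdist n (a k) (a l)"] assms(2) near
    by (auto simp: less_Suc_eq_le sqdist_commute)
  then show ?thesis
    using assms(1,3)
    by (intro sub_p_toral_if_cut_decomposable[where K="Suc n + Suc n * Suc n" and c=c
          and cut="vertex_pair_cut (Suc n)"]) (auto simp: less_Suc_eq_le)
qed

theorem lemma7:
  fixes n :: nat and s :: "nat \<Rightarrow> nat \<Rightarrow> real"
  assumes "regular_simplex n s"
  shows "\<exists>\<delta>>0. \<forall>a :: nat \<Rightarrow> nat \<Rightarrow> real.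
           (\<forall>i\<le>n. a i \<in> euclid n \<and> edist n (a i) (s i) < \<delta>) \<longrightarrow>
           (\<forall>p::nat. prime p \<longrightarrow> sub_p_toral p n (a ` {..n}))"
proof -
  obtain d where "d > 0" and d: "\<forall>i\<le>n. \<forall>j\<le>n. i \<noteq> j \<longrightarrow> edist n (s i) (s j) = d"
    using assms unfolding regular_simplex_def by auto
  define \<delta> where "\<delta> = d / (16 * Suc n)"
  have "\<delta> > 0" "\<delta> \<le> d" "8 * \<delta> * d = d^2 / (2 * Suc n)"
    unfolding \<delta>_def using \<open>d > 0\<close> by (simp_all add: field_simps power2_eq_square)
  show ?thesis
  proof (intro exI[of _ \<delta>] conjI allI impI \<open>\<delta> > 0\<close>)
    fix a :: "nat \<Rightarrow> nat \<Rightarrow> real" and p :: nat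
    assume a: "\<forall>i\<le>n. a i \<in> euclid n \<and> edist n (a i) (s i) < \<delta>" and "prime p"
    have "\<bar>sqdist n (a k) (a l) - d^2\<bar> \<le> d^2 / (2 * Suc n)" if "k \<le> n" "l \<le> n" "k \<noteq> l" for k l
      using sqdist_perturbed[of n "a k" "s k" \<delta> "a l" "s l" d] a d that \<open>\<delta> \<le> d\<close>
        \<open>8 * \<delta> * d = d^2 / (2 * Suc n)\<close> by simp
    then show "sub_p_toral p n (a ` {..n})"
      using sub_p_toral_if_near_regular[of p "d^2" n a] \<open>prime p\<close> \<open>d > 0\<close> a by simp
  qed
qed

end
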